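(* Let $p$ be a prime, let $t$ be a positive integer with $t\mid(p-1)$, let $Q\in\mathbb{F}_p[x,y]$, and let $$P(x,y)=f_n(x)y^n+\dots+f_1(x)y+f_0(x)\in\mathbb{F}_p[x,y]$$ be an irreducible polynomial of bidegree $(m,n)$ with $n\geqslant 1$ (so $f_n\neq 0$, $\deg f_i\leqslant m$). If $P(x,y)$ divides $Q(x,y^t)$ in $\mathbb{F}_p[x,y]$, then $P(x,0)^{\lfloor t/n\rfloor}$ divides $Q(x,0)$ in $\mathbb{F}_p[x]$.
   Context: $\lfloor s\rfloor$ denotes the integer part of a real number $s$. *)

theory Defs
  imports "HOL-Computational_Algebra.Computational_Algebra" "HOL-Library.Cardinality"
begin

end

theory Submission
  imports Defs
begin

text \<open>For every \<open>t\<close>-th root of unity \<open>c\<close> the substitution \<open>y \<mapsto> c y\<close> fixes \<open>Q(x, y\<^sup>t)\<close>,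
  so every dilate \<open>P(x, c y)\<close> divides \<open>Q(x, y\<^sup>t)\<close> as well. By Gauss's lemma \<open>P\<close> is prime in
  \<open>\<bbbF>\<^sub>p[x][y]\<close>, hence so are its dilates, and \<open>P(x, c y)\<close>, \<open>P(x, d y)\<close> are associate only if
  \<open>c\<^sup>n = d\<^sup>n\<close>. As \<open>t\<close> divides \<open>p - 1\<close> there are \<open>t\<close> roots of unity, among which at least
  \<open>\<lfloor>t/n\<rfloor>\<close> have pairwise distinct \<open>n\<close>-th powers. The product of the corresponding dilates
  divides \<open>Q(x, y\<^sup>t)\<close>, and setting \<open>y = 0\<close> gives the claim.\<close>

lemma card_le_mult_card_image:
  assumes "finite A" and "\<And>y. y \<in> f ` A \<Longrightarrow> card {x\<in>A. f x = y} \<le> n"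
  shows "card A \<le> n * card (f ` A)"
proof -
  have "card A = card (\<Union>y\<in>f ` A. {x\<in>A. f x = y})" by (rule arg_cong[of _ _ card]) blast
  also have "\<dots> \<le> (\<Sum>y\<in>f ` A. card {x\<in>A. f x = y})"
    by (rule card_UN_le) (use assms(1) in simp)
  also have "\<dots> \<le> (\<Sum>y\<in>f ` A. n)" by (intro sum_mono assms(2))
  finally show ?thesis by (simp add: mult.commute)
qed

lemma obtain_inj_on_subset_card_le:
  assumes "finite A" and "\<And>y. y \<in> f ` A \<Longrightarrow> card {x\<in>A. f x = y} \<le> n"
  obtains B where "B \<subseteq> A" "inj_on f B" "card A \<le> n * card B"
proof
  let ?B = "inv_into A f ` f ` A"
  show "?B \<subseteq> A" by (auto intro: inv_into_into)
  show inj: "inj_on f ?B" by (intro inj_onI) (auto simp: f_inv_into_f)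
  have "f ` ?B = (\<lambda>y. f (inv_into A f y)) ` f ` A" by (simp add: image_image)
  also have "\<dots> = f ` A" by (auto simp: f_inv_into_f image_iff)
  finally have "f ` ?B = f ` A" .
  then show "card A \<le> n * card ?B"
    using card_le_mult_card_image[OF assms] card_image[OF inj] by simp
qed

lemma card_power_eq_le:
  fixes g :: "'a::idom"
  assumes "k \<ge> 1"
  shows "card {x. x ^ k = g} \<le> k"
proof -
  let ?p = "monom 1 k + [:-g:]"
  have deg: "degree ?p = k"
    using assms by (subst degree_add_eq_left) (auto simp: degree_monom_eq)
  then have "card {x. poly ?p x = 0} \<le> k"
    using assms card_poly_roots_bound[of ?p] by fastforce
  moreover have "{x. poly ?p x = 0} = {x. x ^ k = g}" by (auto simp: poly_monom)
  ultimately show ?thesis by simp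
qed

lemma power_card_minus_one_eq_one:
  fixes a :: "'a::{field,finite}"
  assumes "a \<noteq> 0"
  shows "a ^ (CARD('a) - 1) = 1"
proof -
  let ?A = "UNIV - {0::'a}"
  have "inj_on ((*) a) ?A" using assms by (auto simp: inj_on_def)
  moreover have "(*) a ` ?A = ?A"
  proof (intro equalityI subsetI)
    fix y assume "y \<in> ?A"
    then have "y = a * (y / a)" "y / a \<in> ?A" using assms by auto
    then show "y \<in> (*) a ` ?A" by blast
  qed (use assms in auto)
  ultimately have "prod ((*) a) ?A = prod id ?A"
    using prod.reindex[of "(*) a" ?A id] by simp
  moreover have "prod ((*) a) ?A = a ^ card ?A * prod id ?A"
    by (simp add: prod.distrib)
  moreover have "prod id ?A \<noteq> 0" by simp
  moreover have "card ?A = CARD('a) - 1" by (simp add: card_Diff_singleton)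
  ultimately show ?thesis by simp
qed

text \<open>The \<open>k\<close>-th power map, \<open>k = (q - 1) / t\<close>, sends the \<open>q - 1\<close> units into
  the \<open>t\<close>-th roots of unity with fibres of size at most \<open>k\<close>.\<close>
lemma card_roots_of_unity_ge:
  assumes "t > 0" "t dvd CARD('a::{field,finite}) - 1"
  shows "t \<le> card {c::'a. c ^ t = 1}"
proof -
  obtain k where k: "CARD('a) - 1 = t * k" using assms(2) by blast
  have "CARD('a) \<ge> 2"
    using card_mono[of UNIV "{0::'a, 1}"] by simp
  then have "k \<ge> 1" using k by (cases k) auto
  let ?A = "UNIV - {0::'a}"
  have img: "(\<lambda>a. a ^ k) ` ?A \<subseteq> {c. c ^ t = 1}"
  proof clarify
    fix a :: 'a assume "a \<noteq> 0"
    then have "a ^ (t * k) = 1" using power_card_minus_one_eq_one[of a] k by metis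
    then show "(a ^ k) ^ t = 1" by (simp add: power_mult[symmetric] mult.commute)
  qed
  have "card ?A = CARD('a) - 1" by (simp add: card_Diff_singleton)
  then have "t * k = card ?A" using k by simp
  also have "\<dots> \<le> k * card ((\<lambda>a. a ^ k) ` ?A)"
  proof (rule card_le_mult_card_image)
    fix y
    have "card {a \<in> ?A. a ^ k = y} \<le> card {a. a ^ k = y}" by (intro card_mono) auto
    then show "card {a \<in> ?A. a ^ k = y} \<le> k"
      using card_power_eq_le[OF \<open>k \<ge> 1\<close>, of y] by linarith
  qed simp
  also have "\<dots> \<le> k * card {c::'a. c ^ t = 1}"
    by (intro mult_left_mono card_mono img) auto
  finally show ?thesis using \<open>k \<ge> 1\<close> by (simp add: mult.commute)
qed

lemma prod_prime_elems_dvd: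
  fixes f :: "'b \<Rightarrow> 'a::algebraic_semidom"
  assumes "finite A"
    and "\<And>a. a \<in> A \<Longrightarrow> prime_elem (f a)" "\<And>a. a \<in> A \<Longrightarrow> f a dvd x"
    and "\<And>a b. a \<in> A \<Longrightarrow> b \<in> A \<Longrightarrow> a \<noteq> b \<Longrightarrow> \<not> f a dvd f b"
  shows "prod f A dvd x"
  using assms
proof (induction A rule: finite_induct)
  case (insert a A)
  then obtain r where r: "x = prod f A * r" by (auto elim!: dvdE)
  have "\<not> f a dvd prod f A"
  proof
    assume "f a dvd prod f A"
    then obtain b where "b \<in># image_mset f (mset_set A)" "f a dvd b"
      using prime_elem_dvd_prod_msetE[OF insert.prems(1)] by (metis insertI1 prod_unfold_prod_mset)
    then show False using insert by auto
  qed
  then have "f a dvd r"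
    using insert.prems r by (metis insertI1 prime_elem_dvd_mult_iff)
  then show ?case using r insert.hyps by (simp add: mult.commute mult_dvd_mono)
qed simp

lemma coeff_0_prod: "coeff (prod f A) 0 = (\<Prod>a\<in>A. coeff (f a) 0)"
  by (induction A rule: infinite_finite_induct) (simp_all add: coeff_mult_0)

lemma coeff_0_dvd: "p dvd q \<Longrightarrow> coeff p 0 dvd coeff q 0"
  by (auto simp: coeff_mult_0 elim!: dvdE)

definition dilate_poly :: "'a::comm_semiring_1 \<Rightarrow> 'a poly \<Rightarrow> 'a poly" where
  "dilate_poly c p = pcompose p [:0, c:]"

lemma coeff_dilate_poly [simp]: "coeff (dilate_poly c p) i = c ^ i * coeff p i"
  by (simp add: dilate_poly_def coeff_pcompose_linear)

lemma dilate_poly_1 [simp]: "dilate_poly c 1 = 1"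
  by (simp add: dilate_poly_def pcompose_1)

lemma dilate_poly_mult: "dilate_poly c (p * q) = dilate_poly c p * dilate_poly c q"
  by (simp add: dilate_poly_def pcompose_mult)

lemma dilate_poly_dilate_poly: "dilate_poly a (dilate_poly b p) = dilate_poly (a * b) p"
  by (rule poly_eqI) (simp add: power_mult_distrib ac_simps)

lemma dilate_poly_by_1 [simp]: "dilate_poly 1 p = p"
  by (rule poly_eqI) simp

lemma dilate_poly_dvd: "p dvd q \<Longrightarrow> dilate_poly c p dvd dilate_poly c q"
  by (auto simp: dilate_poly_mult elim!: dvdE)

lemma dilate_poly_pcompose_monom:
  assumes "c ^ t = 1"
  shows "dilate_poly c (pcompose q (monom 1 t)) = pcompose q (monom 1 t)"
proof -
  have "dilate_poly c (monom 1 t) = monom 1 t"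
    using assms by (intro poly_eqI) (auto simp: coeff_monom)
  then show ?thesis by (simp add: dilate_poly_def flip: pcompose_assoc)
qed

lemma prime_elem_dilate_poly:
  fixes p :: "'a::idom_divide poly"
  assumes "c dvd 1" "prime_elem p"
  shows "prime_elem (dilate_poly c p)"
proof -
  obtain c' where c': "c * c' = 1" using assms(1) by (metis dvdE)
  have undo: "dilate_poly c' (dilate_poly c q) = q" "dilate_poly c (dilate_poly c' q) = q" for q
    using c' by (simp_all add: dilate_poly_dilate_poly mult.commute)
  have dvd_iff: "dilate_poly c q dvd r \<longleftrightarrow> q dvd dilate_poly c' r" for q r
    by (metis dilate_poly_dvd undo)
  show ?thesis
  proof (rule prime_elemI)
    show "dilate_poly c p \<noteq> 0"
      using assms(2) undo(1)[of p] by (auto simp: dilate_poly_def)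
    show "\<not> is_unit (dilate_poly c p)"
      using assms(2) by (simp add: dvd_iff prime_elem_not_unit)
  next
    fix a b assume "dilate_poly c p dvd a * b"
    then have "p dvd dilate_poly c' a * dilate_poly c' b" by (simp add: dvd_iff dilate_poly_mult)
    then show "dilate_poly c p dvd a \<or> dilate_poly c p dvd b"
      using assms(2) by (simp add: dvd_iff prime_elem_dvd_mult_iff)
  qed
qed

text \<open>The cofactor has degree \<open>0\<close> and, by the constant terms, equals \<open>1\<close>; the leading
  coefficients then give \<open>c ^ degree p = 1\<close>.\<close>
lemma dvd_dilate_poly_imp_power_degree_eq_1:
  fixes p :: "'a::idom_divide poly"
  assumes "c \<noteq> 0" "coeff p 0 \<noteq> 0" "p dvd dilate_poly c p"
  shows "c ^ degree p = 1"
proof -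
  obtain k where k: "dilate_poly c p = p * k" using assms(3) by (auto elim: dvdE)
  have p0: "p \<noteq> 0" using assms(2) by auto
  have "degree (dilate_poly c p) = degree p"
    using assms(1) by (simp add: dilate_poly_def degree_pcompose)
  moreover have "k \<noteq> 0" using k p0 assms(1) by (auto dest: arg_cong[of _ _ "\<lambda>q. coeff q (degree p)"])
  ultimately have "degree k = 0" using k p0 by (simp add: degree_mult_eq)
  moreover have "coeff k 0 = 1"
    using arg_cong[OF k, of "\<lambda>q. coeff q 0"] assms(2) by (simp add: coeff_mult_0)
  ultimately have "k = 1" by (metis degree_0_id one_pCons)
  then have "c ^ degree p * lead_coeff p = lead_coeff p"
    using arg_cong[OF k, of "\<lambda>q. coeff q (degree p)"] by simp
  then show ?thesis using p0 by simp
qed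

lemma dilate_poly_dvd_dilate_poly_imp_power_eq:
  fixes p :: "'a::idom_divide poly"
  assumes "a dvd 1" "b \<noteq> 0" "coeff p 0 \<noteq> 0" "dilate_poly a p dvd dilate_poly b p"
  shows "a ^ degree p = b ^ degree p"
proof -
  obtain a' where a': "a * a' = 1" using assms(1) by (metis dvdE)
  have "p dvd dilate_poly (a' * b) p"
    using dilate_poly_dvd[OF assms(4), of a'] a'
    by (simp add: dilate_poly_dilate_poly mult.commute)
  then have "(a' * b) ^ degree p = 1"
    using a' assms(2,3) by (intro dvd_dilate_poly_imp_power_degree_eq_1) auto
  then have "a ^ degree p * (a' * b) ^ degree p = a ^ degree p" by simp
  then show ?thesis
    using a' by (simp add: power_mult_distrib mult.assoc[symmetric] flip: power_mult_distrib)
qed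

lemma fract_poly_clear_denominators:
  fixes U :: "'a::idom fract poly"
  obtains d U' where "d \<noteq> 0" "fract_poly U' = smult (to_fract d) U"
proof (induction U arbitrary: thesis)
  case 0
  show ?case by (rule 0[of 1 0]) simp_all
next
  case (pCons z V)
  obtain d V' where V': "d \<noteq> 0" "fract_poly V' = smult (to_fract d) V" by (rule pCons.IH)
  obtain a b where z: "z = Fract a b" "b \<noteq> 0" by (cases z) auto
  have "fract_poly (pCons (a * d) (smult b V')) = smult (to_fract (d * b)) (pCons z V)"
    using V' z by (simp add: map_poly_pCons Fract_conv_to_fract field_simps)
  then show ?case
    using V' z by (intro pCons.prems[of "d * b" "pCons (a * d) (smult b V')"]) simp_all
qed

lemma field_poly_prime_divisor_exists:
  fixes d :: "'a::field poly"
  assumes "d \<noteq> 0" "\<not> is_unit d"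
  obtains \<pi> where "\<pi> dvd d" "prime_elem \<pi>"
proof -
  obtain F :: "'a poly multiset" where F: "prod_mset F = smult (inverse (lead_coeff d)) d"
    and prime: "\<And>\<pi>. \<pi> \<in># F \<Longrightarrow> prime_elem \<pi>"
    using field_poly_prod_mset_prime_factorization[OF assms(1)]
      field_poly_in_prime_factorization_imp_prime by blast
  have "F \<noteq> {#}"
  proof
    assume "F = {#}"
    then have "d * [:inverse (lead_coeff d):] = 1" using F by (simp add: mult.commute)
    then show False using assms(2) by (metis dvdI)
  qed
  then obtain \<pi> where "\<pi> \<in># F" by blast
  moreover have "prod_mset F dvd d" using F assms(1) by (simp add: smult_dvd_iff)
  ultimately show ?thesis
    by (meson dvd_prod_mset dvd_trans prime that)
qed

text \<open>Gauss's lemma over \<open>F[x]\<close>: prime factors of a common coefficient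
  \<open>d \<in> F[x]\<close> of \<open>Y * Z\<close> can be peeled off \<open>Y\<close> or \<open>Z\<close> one at a time, because
  every prime of \<open>F[x]\<close> stays prime as a constant of \<open>F[x][y]\<close>.\<close>
lemma smult_eq_mult_imp_split:
  fixes X Y Z :: "'a::field poly poly"
  assumes "d \<noteq> 0" and "smult d X = Y * Z"
  shows "\<exists>a b Y' Z'. Y = smult a Y' \<and> Z = smult b Z' \<and> X = Y' * Z'"
  using assms
proof (induction "degree d" arbitrary: d Y Z rule: less_induct)
  case less
  show ?case
  proof (cases "is_unit d")
    case True
    then obtain d' where d': "1 = d * d'" by (rule dvdE)
    have "X = smult d' (smult d X)" using d' by (simp add: mult.commute)
    then have "X = smult d' Y * Z" using less.prems(2) by simp
    moreover have "Y = smult d (smult d' Y)" using d' by simp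
    ultimately show ?thesis
      by (intro exI[of _ d] exI[of _ 1] exI[of _ "smult d' Y"] exI[of _ Z]) simp
  next
    case False
    obtain \<pi> where "\<pi> dvd d" and \<pi>: "prime_elem \<pi>"
      using field_poly_prime_divisor_exists[OF less.prems(1) False] by blast
    from \<open>\<pi> dvd d\<close> obtain e where e: "d = \<pi> * e" by (rule dvdE)
    have "\<pi> \<noteq> 0" "e \<noteq> 0" using e \<pi> less.prems(1) by auto
    moreover have "degree \<pi> \<noteq> 0"
      using \<pi> \<open>\<pi> \<noteq> 0\<close> is_unit_iff_degree prime_elem_not_unit by blast
    ultimately have IH: "\<exists>a b Y' Z'. Y = smult a Y' \<and> Z = smult b Z' \<and> X = Y' * Z'"
      if "smult e X = Y * Z" for Y Z
      using less.hyps[of e Y Z] that e by (simp add: degree_mult_eq)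
    have YZ: "Y * Z = [:\<pi>:] * smult e X" using less.prems(2) e by (simp add: ac_simps)
    moreover have "prime_elem [:\<pi>:]" using \<pi> by (simp add: prime_elem_const_poly_iff)
    ultimately consider Y1 where "Y = [:\<pi>:] * Y1" | Z1 where "Z = [:\<pi>:] * Z1"
      by (metis dvd_triv_left dvdE prime_elem_dvd_mult_iff)
    then show ?thesis
    proof cases
      case (1 Y1)
      then have "[:\<pi>:] * smult e X = [:\<pi>:] * (Y1 * Z)" using YZ by (simp add: mult.assoc)
      then have "smult e X = Y1 * Z" using \<open>\<pi> \<noteq> 0\<close> by (subst (asm) mult_left_cancel) simp_all
      then obtain a b Y' Z' where "Y1 = smult a Y'" "Z = smult b Z'" "X = Y' * Z'"
        using IH by blast
      then show ?thesis using 1 by (intro exI[of _ "a * \<pi>"] exI[of _ b] exI[of _ Y'] exI[of _ Z']) simp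
    next
      case (2 Z1)
      then have "[:\<pi>:] * smult e X = [:\<pi>:] * (Y * Z1)" using YZ by (simp add: ac_simps)
      then have "smult e X = Y * Z1" using \<open>\<pi> \<noteq> 0\<close> by (subst (asm) mult_left_cancel) simp_all
      then obtain a b Y' Z' where "Y = smult a Y'" "Z1 = smult b Z'" "X = Y' * Z'"
        using IH by blast
      then show ?thesis using 2 by (intro exI[of _ a] exI[of _ "b * \<pi>"] exI[of _ Y'] exI[of _ Z']) simp
    qed
  qed
qed

lemma irreducible_const_dvd_imp_unit:
  fixes P :: "'a::idom poly"
  assumes "irreducible P" "degree P \<noteq> 0" "[:a:] dvd P"
  shows "a dvd 1"
proof -
  obtain W where W: "P = [:a:] * W" using assms(3) by (rule dvdE)
  have "P \<noteq> 0" using assms(2) by auto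
  then have "a \<noteq> 0" "W \<noteq> 0" using W by auto
  then have "degree W \<noteq> 0" using W assms(2) by (simp add: degree_mult_eq)
  then have "\<not> W dvd 1" by (auto elim: is_unit_polyE)
  then show ?thesis using irreducibleD[OF assms(1) W] by (simp add: is_unit_const_poly_iff)
qed

lemma degree_fract_poly [simp]: "degree (fract_poly p) = degree p"
  by (rule degree_map_poly) simp

lemma irreducible_fract_poly_bivariate:
  fixes P :: "'a::field poly poly"
  assumes "irreducible P" and "degree P \<noteq> 0"
  shows "irreducible (fract_poly P)"
proof (rule irreducibleI)
  show "fract_poly P \<noteq> 0" using assms(1) by auto
  then show "\<not> is_unit (fract_poly P)"
    using assms(2) by (simp add: is_unit_iff_degree)
next
  fix U V assume UV: "fract_poly P = U * V"
  obtain d1 U' where d1: "d1 \<noteq> 0" "fract_poly U' = smult (to_fract d1) U"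
    by (rule fract_poly_clear_denominators)
  obtain d2 V' where d2: "d2 \<noteq> 0" "fract_poly V' = smult (to_fract d2) V"
    by (rule fract_poly_clear_denominators)
  have "fract_poly (smult (d1 * d2) P) = fract_poly (U' * V')"
    using UV d1 d2 by (simp add: ac_simps)
  then have "smult (d1 * d2) P = U' * V'" by (simp only: fract_poly_eq_iff)
  moreover have "d1 * d2 \<noteq> 0" using d1(1) d2(1) by simp
  ultimately obtain a b Y Z where YZ: "U' = smult a Y" "V' = smult b Z" "P = Y * Z"
    using smult_eq_mult_imp_split by blast
  have "degree U = degree U'" "degree V = degree V'"
    using arg_cong[OF d1(2), of degree] arg_cong[OF d2(2), of degree] d1(1) d2(1) by simp_all
  then have "degree U \<le> degree Y" "degree V \<le> degree Z"
    using YZ(1,2) degree_smult_le[of a Y] degree_smult_le[of b Z] by simp_all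
  moreover have "is_unit Y \<or> is_unit Z" using assms(1) YZ(3) by (rule irreducibleD)
  then have "degree Y = 0 \<or> degree Z = 0" by (auto elim!: is_unit_polyE)
  moreover have "U \<noteq> 0" "V \<noteq> 0" using UV assms(1) by auto
  ultimately show "is_unit U \<or> is_unit V" by (auto simp: is_unit_iff_degree)
qed

lemma fract_poly_dvd_imp_dvd_bivariate:
  fixes P A :: "'a::field poly poly"
  assumes "irreducible P" "degree P \<noteq> 0" "fract_poly P dvd fract_poly A"
  shows "P dvd A"
proof -
  obtain C where C: "fract_poly A = fract_poly P * C" using assms(3) by (rule dvdE)
  obtain d C' where d: "d \<noteq> 0" "fract_poly C' = smult (to_fract d) C"
    by (rule fract_poly_clear_denominators)
  have "fract_poly (smult d A) = fract_poly (P * C')" using C d by (simp add: ac_simps)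
  then have "smult d A = P * C'" by (simp only: fract_poly_eq_iff)
  then obtain a b Y Z where YZ: "P = smult a Y" "C' = smult b Z" "A = Y * Z"
    using smult_eq_mult_imp_split[OF d(1)] by blast
  have "is_unit a"
    using irreducible_const_dvd_imp_unit[OF assms(1,2)] YZ(1) by (simp add: dvdI)
  then obtain a' where "1 = a * a'" by (rule dvdE)
  then have "A = P * smult a' Z" using YZ(1,3) by (simp add: mult.commute)
  then show ?thesis by (rule dvdI)
qed

lemma irreducible_imp_prime_elem_bivariate:
  fixes P :: "'a::field poly poly"
  assumes "irreducible P" and "degree P \<noteq> 0"
  shows "prime_elem P"
proof (rule prime_elemI)
  show "P \<noteq> 0" "\<not> is_unit P" using assms(1) by (auto simp: irreducible_not_unit)
next
  fix A B assume "P dvd A * B"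
  then have "fract_poly P dvd fract_poly A * fract_poly B" by (metis fract_poly_dvd fract_poly_mult)
  then have "fract_poly P dvd fract_poly A \<or> fract_poly P dvd fract_poly B"
    using field_poly_irreducible_imp_prime[OF irreducible_fract_poly_bivariate[OF assms]]
    by (simp add: prime_elem_dvd_mult_iff)
  then show "P dvd A \<or> P dvd B" using fract_poly_dvd_imp_dvd_bivariate[OF assms] by blast
qed

text \<open>The dilates of \<open>P\<close> are primes, pairwise non-associate because the powers \<open>c ^ degree P\<close>
  are distinct.\<close>
lemma prod_dilate_poly_dvd:
  fixes P R :: "'a::field poly poly"
  assumes "prime_elem P" "coeff P 0 \<noteq> 0" "P dvd R"
    and "finite C" "0 \<notin> C" "inj_on (\<lambda>c. c ^ degree P) C"
    and "\<And>c. c \<in> C \<Longrightarrow> dilate_poly [:c:] R = R"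
  shows "(\<Prod>c\<in>C. dilate_poly [:c:] P) dvd R"
proof (rule prod_prime_elems_dvd)
  fix c assume "c \<in> C"
  then have "is_unit [:c:]" using assms(5) by (auto simp: is_unit_const_poly_iff dvd_field_iff)
  then show "prime_elem (dilate_poly [:c:] P)" using assms(1) by (rule prime_elem_dilate_poly)
  show "dilate_poly [:c:] P dvd R"
    using dilate_poly_dvd[OF assms(3)] assms(7)[OF \<open>c \<in> C\<close>] by metis
  fix d assume "d \<in> C" "c \<noteq> d"
  show "\<not> dilate_poly [:c:] P dvd dilate_poly [:d:] P"
  proof
    assume "dilate_poly [:c:] P dvd dilate_poly [:d:] P"
    then have "[:c:] ^ degree P = [:d:] ^ degree P"
      using \<open>is_unit [:c:]\<close> \<open>d \<in> C\<close> assms(2,5)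
      by (intro dilate_poly_dvd_dilate_poly_imp_power_eq) auto
    then have "c ^ degree P = d ^ degree P" by (simp add: poly_const_pow)
    then show False using assms(6) \<open>c \<in> C\<close> \<open>d \<in> C\<close> \<open>c \<noteq> d\<close> by (auto dest: inj_onD)
  qed
qed (use assms(4) in simp)

lemma obtain_roots_of_unity_distinct_powers:
  assumes "t > 0" "t dvd CARD('a) - 1" "n \<ge> 1"
  obtains C :: "'a::{field,finite} set"
  where "\<And>c. c \<in> C \<Longrightarrow> c ^ t = 1" "inj_on (\<lambda>c. c ^ n) C" "t div n \<le> card C"
proof -
  define G where "G = {c::'a. c ^ t = 1}"
  have fibre: "card {c \<in> G. c ^ n = z} \<le> n" for z
  proof -
    have "card {c \<in> G. c ^ n = z} \<le> card {c. c ^ n = z}" by (rule card_mono) auto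
    also have "\<dots> \<le> n" by (rule card_power_eq_le[OF assms(3)])
    finally show ?thesis .
  qed
  obtain C where C: "C \<subseteq> G" "inj_on (\<lambda>c. c ^ n) C" "card G \<le> n * card C"
    by (rule obtain_inj_on_subset_card_le[of G "\<lambda>c. c ^ n" n]) (use fibre in auto)
  have "t \<le> n * card C" using card_roots_of_unity_ge[OF assms(1,2)] C(3) by (simp add: G_def)
  then have "t div n \<le> card C" using div_le_mono[of t "n * card C" n] assms(3) by simp
  with C show ?thesis using that by (auto simp: G_def)
qed

theorem lemma2:
  fixes P Q :: "'a::{field,finite} poly poly" and p t m n :: nat
  assumes "prime p" and "CARD('a) = p"
    and "t > 0" and "t dvd (p - 1)"
    and "irreducible P"
    and "degree P = n" and "n \<ge> 1"
    and "\<forall>i. degree (coeff P i) \<le> m"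
    and "P dvd pcompose Q (monom 1 t)"
  shows "(coeff P 0) ^ (t div n) dvd coeff Q 0"
proof -
  have R0: "coeff (pcompose Q (monom 1 t)) 0 = coeff Q 0"
    using assms(3) by (simp add: pcompose_coeff_0 poly_0_coeff_0)
  show ?thesis
  proof (cases "coeff P 0 = 0")
    case True
    then show ?thesis using coeff_0_dvd[OF assms(9)] R0 by simp
  next
    case False
    obtain C :: "'a set"
      where C: "\<And>c. c \<in> C \<Longrightarrow> c ^ t = 1" "inj_on (\<lambda>c. c ^ n) C" "t div n \<le> card C"
      using obtain_roots_of_unity_distinct_powers assms(2-4,7) by metis
    have "(\<Prod>c\<in>C. dilate_poly [:c:] P) dvd pcompose Q (monom 1 t)"
    proof (rule prod_dilate_poly_dvd)
      show "prime_elem P" using assms(5-7) by (intro irreducible_imp_prime_elem_bivariate) auto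
      show "dilate_poly [:c:] (pcompose Q (monom 1 t)) = pcompose Q (monom 1 t)" if "c \<in> C" for c
        using C(1)[OF that] by (intro dilate_poly_pcompose_monom) (simp add: poly_const_pow)
      show "0 \<notin> C" using C(1)[of 0] assms(3) by (auto simp: power_0_left)
    qed (use C(2) assms(6,9) False in auto)
    then have "coeff (\<Prod>c\<in>C. dilate_poly [:c:] P) 0 dvd coeff Q 0"
      using coeff_0_dvd R0 by metis
    then have "coeff P 0 ^ card C dvd coeff Q 0" by (simp add: coeff_0_prod)
    then show ?thesis using C(3) by (meson dvd_trans le_imp_power_dvd)
  qed
qed

end
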